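(* Let $s>1/2$. Then for every $t\in\mathbb{R}$ the trilinear operator $R_3$ defined in the context maps $(\dot H^s)^3$ into $\dot H^s$ and satisfies $$\|R_3(u,v,w)\|_{\dot H^s}\le c_6(s)\|u\|_{\dot H^s}\|v\|_{\dot H^s}\|w\|_{\dot H^s},$$ with a constant $c_6(s)$ depending only on $s$.
   Context: Write $\mathbb{Z}_0=\mathbb{Z}\setminus\{0\}$. For $s\in\mathbb{R}$, $\dot H^s$ denotes the Hilbert space of complex sequences $v=(v_k)_{k\in\mathbb{Z}_0}$ with $\|v\|_{\dot H^s}^2=\sum_{k\in\mathbb{Z}_0}|k|^{2s}|v_k|^2<\infty$. For $t\in\mathbb{R}$, $$R_3(u,v,w)_k=\sum_{k_1+k_2+k_3=k,\ k_1,k_2,k_3\in\mathbb{Z}_0}\frac{e^{3i(k_1+k_2)(k_2+k_3)(k_3+k_1)t}}{k_1}u_{k_1}v_{k_2}w_{k_3},\qquad k\in\mathbb{Z}_0.$$ *)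

theory Defs
  imports "HOL-Analysis.Analysis"
begin

text \<open>Sequences indexed by Z_0 = Z - {0} are modelled as functions int => complex;
  the value at index 0 is ignored by every definition below.\<close>

definition Z0 :: "int set" where "Z0 = UNIV - {0}"

definition Hs_weight :: "real \<Rightarrow> (int \<Rightarrow> complex) \<Rightarrow> int \<Rightarrow> real" where
  "Hs_weight s v k = (real_of_int \<bar>k\<bar>) powr (2 * s) * (norm (v k))\<^sup>2"

definition in_Hs :: "real \<Rightarrow> (int \<Rightarrow> complex) \<Rightarrow> bool" where
  "in_Hs s v \<longleftrightarrow> (Hs_weight s v) summable_on Z0"

definition Hs_norm :: "real \<Rightarrow> (int \<Rightarrow> complex) \<Rightarrow> real" where
  "Hs_norm s v = sqrt (infsum (Hs_weight s v) Z0)"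

definition R3_index :: "int \<Rightarrow> (int \<times> int \<times> int) set" where
  "R3_index k = {(k1, k2, k3). k1 \<noteq> 0 \<and> k2 \<noteq> 0 \<and> k3 \<noteq> 0 \<and> k1 + k2 + k3 = k}"

definition R3_term :: "real \<Rightarrow> (int \<Rightarrow> complex) \<Rightarrow> (int \<Rightarrow> complex) \<Rightarrow> (int \<Rightarrow> complex)
    \<Rightarrow> int \<times> int \<times> int \<Rightarrow> complex" where
  "R3_term t u v w = (\<lambda>(k1, k2, k3).
     exp (\<i> * complex_of_real (3 * real_of_int ((k1 + k2) * (k2 + k3) * (k3 + k1)) * t))
       / of_int k1 * u k1 * v k2 * w k3)"

definition R3 :: "real \<Rightarrow> (int \<Rightarrow> complex) \<Rightarrow> (int \<Rightarrow> complex) \<Rightarrow> (int \<Rightarrow> complex) \<Rightarrow> int \<Rightarrow> complex" where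
  "R3 t u v w k = infsum (R3_term t u v w) (R3_index k)"

end

theory Submission
  imports Defs
begin

text \<open>
  Bounding \<open>1 / \<bar>k1\<bar>\<close> by 1, the coefficient \<open>R3(u,v,w)_k\<close> is dominated by the trilinear
  convolution of \<open>\<bar>u\<bar>, \<bar>v\<bar>, \<bar>w\<bar>\<close> over \<open>k1 + k2 + k3 = k\<close>. Since
  \<open>\<bar>k\<bar>^s \<le> 3^s (\<bar>k1\<bar>^s + \<bar>k2\<bar>^s + \<bar>k3\<bar>^s)\<close>, the Sobolev weight can be moved onto
  one factor at a time, and each of the three resulting convolutions is estimated by Young's
  inequality for \<open>l2 * l1 * l1 \<rightarrow> l2\<close>. For \<open>s > 1/2\<close> the \<open>l1\<close> norms are controlled by the
  \<open>H^s\<close> norm through Cauchy-Schwarz, because \<open>\<bar>k\<bar>^(-2s)\<close> is summable over \<open>k \<noteq> 0\<close>.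
\<close>

lemma nonneg_summable_on_if_finite_sums_le:
  fixes f :: "'a \<Rightarrow> real"
  assumes "\<And>x. x \<in> A \<Longrightarrow> 0 \<le> f x" and "\<And>F. finite F \<Longrightarrow> F \<subseteq> A \<Longrightarrow> sum f F \<le> B"
  shows "f summable_on A"
  by (rule nonneg_bdd_above_summable_on) (use assms in \<open>auto intro!: bdd_aboveI2\<close>)

lemma sum_le_infsum_nonneg:
  fixes f :: "'a \<Rightarrow> real"
  assumes "\<And>x. x \<in> A \<Longrightarrow> 0 \<le> f x" and "f summable_on A" and "finite F" and "F \<subseteq> A"
  shows "sum f F \<le> infsum f A"
  using infsum_mono_neutral[of f F f A] assms by auto

lemma infsum_weighted_Cauchy_Schwarz:
  fixes f w :: "'a \<Rightarrow> real"
  assumes f_nonneg: "\<And>x. x \<in> A \<Longrightarrow> 0 \<le> f x" and w_nonneg: "\<And>x. x \<in> A \<Longrightarrow> 0 \<le> w x"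
    and f2w: "(\<lambda>x. (f x)\<^sup>2 * w x) summable_on A" and w: "w summable_on A"
  shows "(\<lambda>x. f x * w x) summable_on A"
    and "(infsum (\<lambda>x. f x * w x) A)\<^sup>2 \<le> infsum (\<lambda>x. (f x)\<^sup>2 * w x) A * infsum w A"
proof -
  define M where "M = sqrt (infsum (\<lambda>x. (f x)\<^sup>2 * w x) A * infsum w A)"
  have finite_le: "sum (\<lambda>x. f x * w x) F \<le> M" if F: "finite F" "F \<subseteq> A" for F
  proof -
    have "(\<Sum>x\<in>F. (f x * sqrt (w x)) * sqrt (w x))\<^sup>2
        \<le> (\<Sum>x\<in>F. (f x * sqrt (w x))\<^sup>2) * (\<Sum>x\<in>F. (sqrt (w x))\<^sup>2)"
      by (rule Cauchy_Schwarz_ineq_sum)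
    also have "\<dots> = (\<Sum>x\<in>F. (f x)\<^sup>2 * w x) * sum w F"
      using F w_nonneg by (auto intro!: arg_cong2[where f = "(*)"] sum.cong simp: power_mult_distrib)
    also have "\<dots> \<le> infsum (\<lambda>x. (f x)\<^sup>2 * w x) A * infsum w A"
      using F f2w w w_nonneg
      by (intro mult_mono sum_le_infsum_nonneg sum_nonneg infsum_nonneg) auto
    also have "(\<Sum>x\<in>F. (f x * sqrt (w x)) * sqrt (w x)) = sum (\<lambda>x. f x * w x) F"
      using F w_nonneg by (auto intro!: sum.cong simp: mult.assoc)
    finally show ?thesis
      unfolding M_def by (rule real_le_rsqrt)
  qed
  show fw: "(\<lambda>x. f x * w x) summable_on A"
    by (rule nonneg_summable_on_if_finite_sums_le[OF _ finite_le]) (use f_nonneg w_nonneg in auto)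
  have "0 \<le> infsum (\<lambda>x. f x * w x) A"
    using f_nonneg w_nonneg by (auto intro!: infsum_nonneg)
  moreover have "infsum (\<lambda>x. f x * w x) A \<le> M"
    by (rule infsum_le_finite_sums[OF fw finite_le])
  moreover have "0 \<le> infsum (\<lambda>x. (f x)\<^sup>2 * w x) A * infsum w A"
    using w_nonneg by (auto intro!: mult_nonneg_nonneg infsum_nonneg)
  ultimately show "(infsum (\<lambda>x. f x * w x) A)\<^sup>2 \<le> infsum (\<lambda>x. (f x)\<^sup>2 * w x) A * infsum w A"
    unfolding M_def by (metis power_mono real_sqrt_pow2)
qed

lemma summable_on_product_nonneg:
  fixes f :: "'a \<Rightarrow> real" and g :: "'b \<Rightarrow> real"
  assumes f_nonneg: "\<And>x. x \<in> A \<Longrightarrow> 0 \<le> f x" and g_nonneg: "\<And>y. y \<in> B \<Longrightarrow> 0 \<le> g y"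
    and f: "f summable_on A" and g: "g summable_on B"
  shows "(\<lambda>(x, y). f x * g y) summable_on A \<times> B"
    and "infsum (\<lambda>(x, y). f x * g y) (A \<times> B) \<le> infsum f A * infsum g B"
proof -
  have finite_le: "sum (\<lambda>(x, y). f x * g y) F \<le> infsum f A * infsum g B"
    if F: "finite F" "F \<subseteq> A \<times> B" for F
  proof -
    have sub: "fst ` F \<subseteq> A" "snd ` F \<subseteq> B" using F by auto
    have "sum (\<lambda>(x, y). f x * g y) F \<le> sum (\<lambda>(x, y). f x * g y) (fst ` F \<times> snd ` F)"
      using F sub f_nonneg g_nonneg
      by (intro sum_mono2) (auto intro!: mult_nonneg_nonneg simp: subset_fst_snd)
    also have "\<dots> = sum f (fst ` F) * sum g (snd ` F)"
      by (simp add: sum_product sum.cartesian_product)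
    also have "\<dots> \<le> infsum f A * infsum g B"
      using F sub f g f_nonneg g_nonneg
      by (intro mult_mono sum_le_infsum_nonneg infsum_nonneg sum_nonneg) auto
    finally show ?thesis .
  qed
  show product: "(\<lambda>(x, y). f x * g y) summable_on A \<times> B"
    by (rule nonneg_summable_on_if_finite_sums_le[OF _ finite_le])
      (use f_nonneg g_nonneg in auto)
  show "infsum (\<lambda>(x, y). f x * g y) (A \<times> B) \<le> infsum f A * infsum g B"
    by (rule infsum_le_finite_sums[OF product finite_le])
qed

definition tensor3 :: "('a \<Rightarrow> real) \<Rightarrow> ('a \<Rightarrow> real) \<Rightarrow> ('a \<Rightarrow> real) \<Rightarrow> 'a \<times> 'a \<times> 'a \<Rightarrow> real"
  where "tensor3 f g h = (\<lambda>(x, y, z). f x * g y * h z)"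

lemma tensor3_apply [simp]: "tensor3 f g h (x, y, z) = f x * g y * h z"
  by (simp add: tensor3_def)

lemma tensor3_summable_on_cube:
  fixes f g h :: "'a \<Rightarrow> real"
  assumes "\<And>x. x \<in> A \<Longrightarrow> 0 \<le> f x" "\<And>x. x \<in> A \<Longrightarrow> 0 \<le> g x" "\<And>x. x \<in> A \<Longrightarrow> 0 \<le> h x"
    and "f summable_on A" "g summable_on A" "h summable_on A"
  shows "tensor3 f g h summable_on A \<times> A \<times> A"
    and "infsum (tensor3 f g h) (A \<times> A \<times> A) \<le> infsum f A * infsum g A * infsum h A"
proof -
  define gh where "gh = (\<lambda>(y, z). g y * h z)"
  have gh: "gh summable_on A \<times> A" "infsum gh (A \<times> A) \<le> infsum g A * infsum h A"
    unfolding gh_def using assms by (auto intro!: summable_on_product_nonneg)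
  have gh_nonneg: "0 \<le> gh p" if "p \<in> A \<times> A" for p
    using that assms by (auto simp: gh_def)
  have tensor3_eq: "tensor3 f g h = (\<lambda>(x, p). f x * gh p)"
    by (auto simp: tensor3_def gh_def fun_eq_iff)
  show "tensor3 f g h summable_on A \<times> A \<times> A"
    unfolding tensor3_eq by (rule summable_on_product_nonneg(1)) (use assms gh gh_nonneg in auto)
  have "infsum (tensor3 f g h) (A \<times> A \<times> A) \<le> infsum f A * infsum gh (A \<times> A)"
    unfolding tensor3_eq by (rule summable_on_product_nonneg(2)) (use assms gh gh_nonneg in auto)
  also have "\<dots> \<le> infsum f A * (infsum g A * infsum h A)"
    using assms gh by (intro mult_left_mono infsum_nonneg) auto
  finally show "infsum (tensor3 f g h) (A \<times> A \<times> A) \<le> infsum f A * infsum g A * infsum h A"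
    by (simp add: mult.assoc)
qed

lemma mem_Z0 [simp]: "k \<in> Z0 \<longleftrightarrow> k \<noteq> 0"
  by (simp add: Z0_def)

lemma R3_index_subset: "R3_index k \<subseteq> Z0 \<times> Z0 \<times> Z0"
  by (auto simp: R3_index_def)

lemma R3_index_disjoint: "k \<noteq> k' \<Longrightarrow> R3_index k \<inter> R3_index k' = {}"
  by (auto simp: R3_index_def)

definition conv3 :: "(int \<Rightarrow> real) \<Rightarrow> (int \<Rightarrow> real) \<Rightarrow> (int \<Rightarrow> real) \<Rightarrow> int \<Rightarrow> real"
  where "conv3 f g h k = infsum (tensor3 f g h) (R3_index k)"

lemma conv3_nonneg:
  "(\<And>x. 0 \<le> f x) \<Longrightarrow> (\<And>x. 0 \<le> g x) \<Longrightarrow> (\<And>x. 0 \<le> h x) \<Longrightarrow> 0 \<le> conv3 f g h k"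
  unfolding conv3_def by (intro infsum_nonneg) (auto simp: tensor3_def)

lemma
  shows summable_on_R3_index_tensor3_swap12:
      "tensor3 g f h summable_on R3_index k \<longleftrightarrow> tensor3 f g h summable_on R3_index k"
    and conv3_swap12: "conv3 g f h k = conv3 f g h k"
proof -
  define sw where "sw = (\<lambda>(x::int, y::int, z::int). (y, x, z))"
  have inv: "\<And>p. p \<in> R3_index k \<Longrightarrow> sw (sw p) = p"
    and mem: "\<And>p. p \<in> R3_index k \<Longrightarrow> sw p \<in> R3_index k"
    and val: "\<And>p. p \<in> R3_index k \<Longrightarrow> tensor3 f g h (sw p) = tensor3 g f h p"
    by (auto simp: sw_def R3_index_def)
  show "tensor3 g f h summable_on R3_index k \<longleftrightarrow> tensor3 f g h summable_on R3_index k"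
    by (rule summable_on_reindex_bij_witness[where i = sw and j = sw and S = "R3_index k" and T = "R3_index k"
        and h = "tensor3 f g h" and g = "tensor3 g f h", OF inv mem inv mem val])
  show "conv3 g f h k = conv3 f g h k"
    unfolding conv3_def by (rule infsum_reindex_bij_witness[where i = sw and j = sw and S = "R3_index k" and T = "R3_index k"
        and h = "tensor3 f g h" and g = "tensor3 g f h", OF inv mem inv mem val])
qed

lemma
  shows summable_on_R3_index_tensor3_swap13:
      "tensor3 h g f summable_on R3_index k \<longleftrightarrow> tensor3 f g h summable_on R3_index k"
    and conv3_swap13: "conv3 h g f k = conv3 f g h k"
proof -
  define sw where "sw = (\<lambda>(x::int, y::int, z::int). (z, y, x))"
  have inv: "\<And>p. p \<in> R3_index k \<Longrightarrow> sw (sw p) = p"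
    and mem: "\<And>p. p \<in> R3_index k \<Longrightarrow> sw p \<in> R3_index k"
    and val: "\<And>p. p \<in> R3_index k \<Longrightarrow> tensor3 f g h (sw p) = tensor3 h g f p"
    by (auto simp: sw_def R3_index_def)
  show "tensor3 h g f summable_on R3_index k \<longleftrightarrow> tensor3 f g h summable_on R3_index k"
    by (rule summable_on_reindex_bij_witness[where i = sw and j = sw and S = "R3_index k" and T = "R3_index k"
        and h = "tensor3 f g h" and g = "tensor3 h g f", OF inv mem inv mem val])
  show "conv3 h g f k = conv3 f g h k"
    unfolding conv3_def by (rule infsum_reindex_bij_witness[where i = sw and j = sw and S = "R3_index k" and T = "R3_index k"
        and h = "tensor3 f g h" and g = "tensor3 h g f", OF inv mem inv mem val])
qed

lemma conv3_square_summable: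
  fixes F G H :: "int \<Rightarrow> real"
  assumes F_nonneg: "\<And>x. 0 \<le> F x" and G_nonneg: "\<And>x. 0 \<le> G x" and H_nonneg: "\<And>x. 0 \<le> H x"
    and F: "(\<lambda>k. (F k)\<^sup>2) summable_on Z0" and G: "G summable_on Z0" and H: "H summable_on Z0"
  shows "tensor3 F G H summable_on R3_index k"
    and "(\<lambda>k. (conv3 F G H k)\<^sup>2) summable_on A"
    and "infsum (\<lambda>k. (conv3 F G H k)\<^sup>2) A
           \<le> infsum (\<lambda>k. (F k)\<^sup>2) Z0 * (infsum G Z0)\<^sup>2 * (infsum H Z0)\<^sup>2"
proof -
  text \<open>Cauchy-Schwarz on each fibre \<open>R3_index k\<close> with weight \<open>G k2 * H k3\<close>; the fibres are
    disjoint subsets of \<open>Z0\<^sup>3\<close>, so the resulting bounds add up to a sum over all of \<open>Z0\<^sup>3\<close>.\<close>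
  define NG where "NG = infsum G Z0"
  define NH where "NH = infsum H Z0"
  define GH where "GH = (\<lambda>(y, z). G y * H z)"
  define F2 where "F2 = (\<lambda>k. (F k)\<^sup>2)"
  have GH: "GH summable_on Z0 \<times> Z0" "infsum GH (Z0 \<times> Z0) \<le> NG * NH"
    unfolding GH_def NG_def NH_def using assms by (auto intro!: summable_on_product_nonneg)
  have fibre_GH: "(GH \<circ> snd) summable_on R3_index k \<and> infsum (GH \<circ> snd) (R3_index k) \<le> NG * NH"
    for k
  proof -
    have inj: "inj_on snd (R3_index k)"
      by (auto simp: inj_on_def R3_index_def)
    have image: "snd ` R3_index k \<subseteq> Z0 \<times> Z0"
      using R3_index_subset by fastforce
    have "GH summable_on snd ` R3_index k"
      using GH(1) image by (rule summable_on_subset_banach)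
    moreover have "infsum GH (snd ` R3_index k) \<le> infsum GH (Z0 \<times> Z0)"
      using GH(1) image calculation G_nonneg H_nonneg
      by (intro infsum_mono_neutral) (auto simp: GH_def)
    ultimately show ?thesis
      using GH(2) inj by (simp add: summable_on_reindex infsum_reindex)
  qed
  have cube: "tensor3 F2 G H summable_on Z0 \<times> Z0 \<times> Z0"
    "infsum (tensor3 F2 G H) (Z0 \<times> Z0 \<times> Z0) \<le> infsum F2 Z0 * NG * NH"
    unfolding NG_def NH_def F2_def using assms by (auto intro!: tensor3_summable_on_cube)
  have fibre: "tensor3 F G H summable_on R3_index k \<and>
      (conv3 F G H k)\<^sup>2 \<le> infsum (tensor3 F2 G H) (R3_index k) * (NG * NH)" for k
  proof -
    have split: "tensor3 F G H = (\<lambda>p. F (fst p) * (GH \<circ> snd) p)"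
      "tensor3 F2 G H = (\<lambda>p. (F (fst p))\<^sup>2 * (GH \<circ> snd) p)"
      by (auto simp: fun_eq_iff GH_def F2_def)
    have "tensor3 F2 G H summable_on R3_index k"
      using cube(1) R3_index_subset by (rule summable_on_subset_banach)
    note CS = infsum_weighted_Cauchy_Schwarz[where f = "\<lambda>p. F (fst p)" and w = "GH \<circ> snd",
        OF _ _ this[unfolded split] conjunct1[OF fibre_GH]]
    have "0 \<le> infsum (tensor3 F2 G H) (R3_index k)"
      by (intro infsum_nonneg) (auto simp: tensor3_def F2_def G_nonneg H_nonneg)
    then show ?thesis
      using CS fibre_GH[of k] F_nonneg G_nonneg H_nonneg
      unfolding conv3_def split by (auto simp: GH_def elim!: order.trans intro!: mult_left_mono)
  qed
  have finite_le: "(\<Sum>k\<in>K. (conv3 F G H k)\<^sup>2) \<le> infsum F2 Z0 * NG\<^sup>2 * NH\<^sup>2" if "finite K" for K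
  proof -
    have union: "tensor3 F2 G H summable_on (\<Union>k\<in>K. R3_index k)"
      by (rule summable_on_subset_banach[OF cube(1)]) (use R3_index_subset in blast)
    have "(\<Sum>k\<in>K. infsum (tensor3 F2 G H) (R3_index k))
        = infsum (tensor3 F2 G H) (\<Union>k\<in>K. R3_index k)"
      using that cube(1) R3_index_subset R3_index_disjoint
      by (intro sum_infsum) (auto intro: summable_on_subset_banach)
    also have "\<dots> \<le> infsum (tensor3 F2 G H) (Z0 \<times> Z0 \<times> Z0)"
      using union cube(1) R3_index_subset G_nonneg H_nonneg
      by (intro infsum_mono_neutral) (auto simp: tensor3_def F2_def)
    also have "\<dots> \<le> infsum F2 Z0 * NG * NH"
      by (rule cube(2))
    finally have fibres_le: "(\<Sum>k\<in>K. infsum (tensor3 F2 G H) (R3_index k)) \<le> infsum F2 Z0 * NG * NH" .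
    have "0 \<le> NG * NH"
      unfolding NG_def NH_def using G_nonneg H_nonneg by (intro mult_nonneg_nonneg infsum_nonneg) auto
    have "(\<Sum>k\<in>K. (conv3 F G H k)\<^sup>2) \<le> (\<Sum>k\<in>K. infsum (tensor3 F2 G H) (R3_index k)) * (NG * NH)"
      unfolding sum_distrib_right using fibre by (intro sum_mono) blast
    also have "\<dots> \<le> infsum F2 Z0 * NG * NH * (NG * NH)"
      using fibres_le \<open>0 \<le> NG * NH\<close> by (rule mult_right_mono)
    finally show ?thesis
      by (simp add: power2_eq_square mult_ac)
  qed
  show "tensor3 F G H summable_on R3_index k"
    using fibre by blast
  show summable: "(\<lambda>k. (conv3 F G H k)\<^sup>2) summable_on A"
    by (rule nonneg_summable_on_if_finite_sums_le[OF _ finite_le]) auto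
  show "infsum (\<lambda>k. (conv3 F G H k)\<^sup>2) A \<le> infsum (\<lambda>k. (F k)\<^sup>2) Z0 * (infsum G Z0)\<^sup>2 * (infsum H Z0)\<^sup>2"
    using infsum_le_finite_sums[OF summable finite_le] by (simp add: F2_def NG_def NH_def)
qed

lemma abs_powr_summable_on_Z0:
  assumes "a < -1"
  shows "(\<lambda>k::int. real_of_int \<bar>k\<bar> powr a) summable_on Z0"
proof -
  let ?f = "\<lambda>k::int. real_of_int \<bar>k\<bar> powr a"
  have "summable (\<lambda>n::nat. real n powr a)"
    using assms by (simp add: summable_real_powr_iff)
  then have nat: "(\<lambda>n::nat. real n powr a) summable_on {1..}"
    by (auto intro: summable_on_subset simp: summable_on_UNIV_nonneg_real_iff[symmetric])
  have pos: "?f summable_on int ` {1..}" and neg: "?f summable_on (\<lambda>n. - int n) ` {1..}"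
    using nat by (auto simp: summable_on_reindex inj_on_def o_def)
  have "?f summable_on int ` {1..} \<union> (\<lambda>n. - int n) ` {1..}"
    by (rule summable_on_Un_disjoint[OF pos neg]) auto
  moreover have "Z0 = int ` {1..} \<union> (\<lambda>n. - int n) ` {1..}"
  proof (intro equalityI subsetI)
    fix k :: int assume "k \<in> Z0"
    then have "k = int (nat \<bar>k\<bar>) \<or> k = - int (nat \<bar>k\<bar>)" "nat \<bar>k\<bar> \<in> {1..}"
      by auto
    then show "k \<in> int ` {1..} \<union> (\<lambda>n. - int n) ` {1..}"
      by blast
  qed auto
  ultimately show ?thesis
    by simp
qed

definition Z0_zeta :: "real \<Rightarrow> real"
  where "Z0_zeta p = infsum (\<lambda>k::int. real_of_int \<bar>k\<bar> powr (- p)) Z0"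

lemma Z0_zeta_nonneg: "0 \<le> Z0_zeta p"
  unfolding Z0_zeta_def by (intro infsum_nonneg) simp

definition abs_powr_mult :: "real \<Rightarrow> (int \<Rightarrow> real) \<Rightarrow> int \<Rightarrow> real"
  where "abs_powr_mult s a k = real_of_int \<bar>k\<bar> powr s * a k"

lemma Hs_weight_eq_square: "Hs_weight s u k = (abs_powr_mult s (\<lambda>k. norm (u k)) k)\<^sup>2"
  by (cases "k = 0") (simp_all add: Hs_weight_def abs_powr_mult_def power_mult_distrib powr_power)

lemma infsum_Hs_weight_nonneg: "0 \<le> infsum (Hs_weight s u) A"
  by (rule infsum_nonneg) (simp add: Hs_weight_def)

lemma Hs_norm_square: "(Hs_norm s u)\<^sup>2 = infsum (Hs_weight s u) Z0"
  by (simp add: Hs_norm_def infsum_Hs_weight_nonneg)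

lemma Hs_norm_nonneg: "0 \<le> Hs_norm s u"
  by (simp add: Hs_norm_def infsum_Hs_weight_nonneg)

lemma in_Hs_square_summable:
  assumes "in_Hs s u"
  shows "(\<lambda>k. (abs_powr_mult s (\<lambda>k. norm (u k)) k)\<^sup>2) summable_on Z0"
    and "infsum (\<lambda>k. (abs_powr_mult s (\<lambda>k. norm (u k)) k)\<^sup>2) Z0 = (Hs_norm s u)\<^sup>2"
  using assms by (simp_all add: in_Hs_def Hs_norm_square Hs_weight_eq_square[symmetric])

lemma in_Hs_summable_norm:
  assumes "s > 1/2" and "in_Hs s u"
  shows "(\<lambda>k. norm (u k)) summable_on Z0"
    and "(infsum (\<lambda>k. norm (u k)) Z0)\<^sup>2 \<le> Z0_zeta (2 * s) * (Hs_norm s u)\<^sup>2"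
proof -
  define f where "f = (\<lambda>k. real_of_int \<bar>k\<bar> powr (2 * s) * norm (u k))"
  define w where "w = (\<lambda>k::int. real_of_int \<bar>k\<bar> powr (- (2 * s)))"
  have fw: "f k * w k = norm (u k)" and f2w: "(f k)\<^sup>2 * w k = Hs_weight s u k"
    if "k \<in> Z0" for k
  proof -
    have cancel: "real_of_int \<bar>k\<bar> powr (2 * s) * real_of_int \<bar>k\<bar> powr (- (2 * s)) = 1"
      using that by (simp flip: powr_add)
    have cancel_sq: "(real_of_int \<bar>k\<bar> powr (2 * s))\<^sup>2 * real_of_int \<bar>k\<bar> powr (- (2 * s))
        = real_of_int \<bar>k\<bar> powr (2 * s)"
      using that by (simp add: powr_power flip: powr_add)
    show "f k * w k = norm (u k)"
      using cancel by (simp add: f_def w_def mult_ac)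
    show "(f k)\<^sup>2 * w k = Hs_weight s u k"
      using cancel_sq by (simp add: f_def w_def Hs_weight_def power_mult_distrib mult_ac)
  qed
  have w: "w summable_on Z0"
    unfolding w_def using assms(1) by (intro abs_powr_summable_on_Z0) simp
  have f_nonneg: "0 \<le> f k" and w_nonneg: "0 \<le> w k" for k
    by (simp_all add: f_def w_def)
  have sum_fw: "infsum (\<lambda>k. f k * w k) Z0 = infsum (\<lambda>k. norm (u k)) Z0"
    and summable_fw: "(\<lambda>k. f k * w k) summable_on Z0 \<longleftrightarrow> (\<lambda>k. norm (u k)) summable_on Z0"
    using fw by (auto intro!: infsum_cong summable_on_cong)
  have sum_f2w: "infsum (\<lambda>k. (f k)\<^sup>2 * w k) Z0 = (Hs_norm s u)\<^sup>2"
    and summable_f2w: "(\<lambda>k. (f k)\<^sup>2 * w k) summable_on Z0 \<longleftrightarrow> in_Hs s u"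
    using f2w by (auto simp: Hs_norm_square in_Hs_def intro!: infsum_cong summable_on_cong)
  note CS = infsum_weighted_Cauchy_Schwarz[OF f_nonneg w_nonneg summable_f2w[THEN iffD2, OF assms(2)] w]
  show "(\<lambda>k. norm (u k)) summable_on Z0"
    using CS(1) summable_fw by simp
  show "(infsum (\<lambda>k. norm (u k)) Z0)\<^sup>2 \<le> Z0_zeta (2 * s) * (Hs_norm s u)\<^sup>2"
    using CS(2) unfolding sum_fw sum_f2w by (simp add: Z0_zeta_def w_def mult.commute)
qed

lemma abs_sum3_powr_le:
  assumes "0 \<le> s"
  shows "real_of_int \<bar>k1 + k2 + k3\<bar> powr s
    \<le> 3 powr s * (real_of_int \<bar>k1\<bar> powr s + real_of_int \<bar>k2\<bar> powr s + real_of_int \<bar>k3\<bar> powr s)"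
proof -
  define M where "M = max (real_of_int \<bar>k1\<bar>) (max (real_of_int \<bar>k2\<bar>) (real_of_int \<bar>k3\<bar>))"
  have "real_of_int \<bar>k1 + k2 + k3\<bar> powr s \<le> (3 * M) powr s"
    using assms by (intro powr_mono2) (auto simp: M_def)
  also have "\<dots> = 3 powr s * M powr s"
    by (simp add: M_def powr_mult)
  also have "M powr s \<le> real_of_int \<bar>k1\<bar> powr s + real_of_int \<bar>k2\<bar> powr s + real_of_int \<bar>k3\<bar> powr s"
    unfolding M_def by (auto simp: max_def add_increasing add_increasing2)
  finally show ?thesis
    by (simp add: mult_left_mono)
qed

lemma conv3_abs_powr_le:
  fixes a b c :: "int \<Rightarrow> real"
  assumes "0 \<le> s" and a: "\<And>x. 0 \<le> a x" and b: "\<And>x. 0 \<le> b x" and c: "\<And>x. 0 \<le> c x"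
    and abc: "tensor3 a b c summable_on R3_index k"
    and Mabc: "tensor3 (abs_powr_mult s a) b c summable_on R3_index k"
    and aMbc: "tensor3 a (abs_powr_mult s b) c summable_on R3_index k"
    and abMc: "tensor3 a b (abs_powr_mult s c) summable_on R3_index k"
  shows "real_of_int \<bar>k\<bar> powr s * conv3 a b c k
    \<le> 3 powr s * (conv3 (abs_powr_mult s a) b c k + conv3 a (abs_powr_mult s b) c k
                   + conv3 a b (abs_powr_mult s c) k)"
proof -
  define T where "T p = tensor3 (abs_powr_mult s a) b c p + tensor3 a (abs_powr_mult s b) c p
    + tensor3 a b (abs_powr_mult s c) p" for p
  have T: "T summable_on R3_index k"
    unfolding T_def by (intro summable_on_add Mabc aMbc abMc)
  have pointwise: "real_of_int \<bar>k\<bar> powr s * tensor3 a b c p \<le> 3 powr s * T p"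
    if p_mem: "p \<in> R3_index k" for p
  proof -
    obtain k1 k2 k3 where p: "p = (k1, k2, k3)" and k: "k = k1 + k2 + k3"
      using p_mem by (cases p) (auto simp: R3_index_def)
    have "real_of_int \<bar>k\<bar> powr s * tensor3 a b c p
        \<le> 3 powr s * (real_of_int \<bar>k1\<bar> powr s + real_of_int \<bar>k2\<bar> powr s + real_of_int \<bar>k3\<bar> powr s)
          * tensor3 a b c p"
      unfolding k using abs_sum3_powr_le[OF \<open>0 \<le> s\<close>] a b c
      by (intro mult_right_mono) (auto simp: p)
    also have "\<dots> = 3 powr s * T p"
      by (simp add: p T_def abs_powr_mult_def algebra_simps)
    finally show ?thesis .
  qed
  have "real_of_int \<bar>k\<bar> powr s * conv3 a b c k
      = infsum (\<lambda>p. real_of_int \<bar>k\<bar> powr s * tensor3 a b c p) (R3_index k)"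
    unfolding conv3_def by (rule infsum_cmult_right[symmetric]) (use abc in simp)
  also have "\<dots> \<le> infsum (\<lambda>p. 3 powr s * T p) (R3_index k)"
    using abc T pointwise by (intro infsum_mono summable_on_cmult_right) auto
  also have "\<dots> = 3 powr s * infsum T (R3_index k)"
    by (rule infsum_cmult_right) (use T in simp)
  also have "infsum T (R3_index k) = conv3 (abs_powr_mult s a) b c k + conv3 a (abs_powr_mult s b) c k
      + conv3 a b (abs_powr_mult s c) k"
    unfolding T_def conv3_def by (simp add: infsum_add summable_on_add Mabc aMbc abMc)
  finally show ?thesis .
qed

lemma norm_R3_term_le:
  assumes "p \<in> R3_index k"
  shows "norm (R3_term t u v w p) \<le> tensor3 (\<lambda>k. norm (u k)) (\<lambda>k. norm (v k)) (\<lambda>k. norm (w k)) p"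
proof -
  obtain k1 k2 k3 where p: "p = (k1, k2, k3)" and "k1 \<noteq> 0"
    using assms by (cases p) (auto simp: R3_index_def)
  have "norm (R3_term t u v w p) = norm (u k1) * norm (v k2) * norm (w k3) / real_of_int \<bar>k1\<bar>"
    by (simp add: p R3_term_def norm_mult norm_divide)
  also have "\<dots> \<le> norm (u k1) * norm (v k2) * norm (w k3)"
  proof -
    have "1 \<le> real_of_int \<bar>k1\<bar>"
      using \<open>k1 \<noteq> 0\<close> by linarith
    then show ?thesis
      by (simp add: divide_le_eq mult_le_cancel_left1 order.strict_iff_not)
  qed
  finally show ?thesis
    by (simp add: p)
qed

lemma R3_summable_norm_le_conv3:
  assumes "tensor3 (\<lambda>k. norm (u k)) (\<lambda>k. norm (v k)) (\<lambda>k. norm (w k)) summable_on R3_index k"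
  shows "R3_term t u v w summable_on R3_index k"
    and "norm (R3 t u v w k) \<le> conv3 (\<lambda>k. norm (u k)) (\<lambda>k. norm (v k)) (\<lambda>k. norm (w k)) k"
proof -
  have norm_summable: "(\<lambda>p. norm (R3_term t u v w p)) summable_on R3_index k"
    using assms norm_R3_term_le by (rule Infinite_Sum.abs_summable_on_comparison_test')
  then show "R3_term t u v w summable_on R3_index k"
    by (rule Infinite_Sum.abs_summable_summable)
  have "norm (R3 t u v w k) \<le> infsum (\<lambda>p. norm (R3_term t u v w p)) (R3_index k)"
    unfolding R3_def by (rule norm_infsum_bound[OF norm_summable])
  also have "\<dots> \<le> conv3 (\<lambda>k. norm (u k)) (\<lambda>k. norm (v k)) (\<lambda>k. norm (w k)) k"
    unfolding conv3_def using norm_summable assms norm_R3_term_le by (rule infsum_mono)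
  finally show "norm (R3 t u v w k) \<le> conv3 (\<lambda>k. norm (u k)) (\<lambda>k. norm (v k)) (\<lambda>k. norm (w k)) k" .
qed

lemma tensor3_summable_on_R3_index:
  fixes a b c :: "int \<Rightarrow> real"
  assumes "\<And>x. 0 \<le> a x" "\<And>x. 0 \<le> b x" "\<And>x. 0 \<le> c x"
    and "a summable_on Z0" "b summable_on Z0" "c summable_on Z0"
  shows "tensor3 a b c summable_on R3_index k"
  using tensor3_summable_on_cube(1)[of Z0 a b c] assms
  by (auto intro: summable_on_subset_banach[OF _ R3_index_subset])

lemma conv3_Hs_square_summable:
  assumes "s > 1/2" and u: "in_Hs s u" and v: "in_Hs s v" and w: "in_Hs s w"
  shows "tensor3 (abs_powr_mult s (\<lambda>k. norm (u k))) (\<lambda>k. norm (v k)) (\<lambda>k. norm (w k))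
           summable_on R3_index k"
    and "(\<lambda>k. (conv3 (abs_powr_mult s (\<lambda>k. norm (u k))) (\<lambda>k. norm (v k)) (\<lambda>k. norm (w k)) k)\<^sup>2)
           summable_on Z0"
    and "infsum (\<lambda>k. (conv3 (abs_powr_mult s (\<lambda>k. norm (u k))) (\<lambda>k. norm (v k)) (\<lambda>k. norm (w k)) k)\<^sup>2) Z0
           \<le> (Z0_zeta (2 * s) * Hs_norm s u * Hs_norm s v * Hs_norm s w)\<^sup>2"
proof -
  have nonneg: "0 \<le> abs_powr_mult s (\<lambda>k. norm (u k)) x" "0 \<le> norm (v x)" "0 \<le> norm (w x)" for x
    by (simp_all add: abs_powr_mult_def)
  note young = conv3_square_summable[where F = "abs_powr_mult s (\<lambda>k. norm (u k))"
      and G = "\<lambda>k. norm (v k)" and H = "\<lambda>k. norm (w k)",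
      OF nonneg in_Hs_square_summable(1)[OF u]
        in_Hs_summable_norm(1)[OF \<open>s > 1/2\<close> v] in_Hs_summable_norm(1)[OF \<open>s > 1/2\<close> w]]
  show "tensor3 (abs_powr_mult s (\<lambda>k. norm (u k))) (\<lambda>k. norm (v k)) (\<lambda>k. norm (w k))
      summable_on R3_index k"
    and "(\<lambda>k. (conv3 (abs_powr_mult s (\<lambda>k. norm (u k))) (\<lambda>k. norm (v k)) (\<lambda>k. norm (w k)) k)\<^sup>2)
      summable_on Z0"
    by (fact young(1), fact young(2))
  have "infsum (\<lambda>k. (conv3 (abs_powr_mult s (\<lambda>k. norm (u k))) (\<lambda>k. norm (v k)) (\<lambda>k. norm (w k)) k)\<^sup>2) Z0
      \<le> (Hs_norm s u)\<^sup>2 * (infsum (\<lambda>k. norm (v k)) Z0)\<^sup>2 * (infsum (\<lambda>k. norm (w k)) Z0)\<^sup>2"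
    using young(3) by (simp add: in_Hs_square_summable(2)[OF u])
  also have "\<dots> \<le> (Hs_norm s u)\<^sup>2 * (Z0_zeta (2 * s) * (Hs_norm s v)\<^sup>2) * (Z0_zeta (2 * s) * (Hs_norm s w)\<^sup>2)"
    using in_Hs_summable_norm(2)[OF \<open>s > 1/2\<close> v] in_Hs_summable_norm(2)[OF \<open>s > 1/2\<close> w]
    by (intro mult_mono) (simp_all add: Z0_zeta_nonneg)
  also have "\<dots> = (Z0_zeta (2 * s) * Hs_norm s u * Hs_norm s v * Hs_norm s w)\<^sup>2"
    by (simp add: power_mult_distrib power2_eq_square)
  finally show "infsum (\<lambda>k. (conv3 (abs_powr_mult s (\<lambda>k. norm (u k))) (\<lambda>k. norm (v k))
      (\<lambda>k. norm (w k)) k)\<^sup>2) Z0 \<le> (Z0_zeta (2 * s) * Hs_norm s u * Hs_norm s v * Hs_norm s w)\<^sup>2" .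
qed

lemma square_sum3_le: "((x::real) + y + z)\<^sup>2 \<le> 3 * (x\<^sup>2 + y\<^sup>2 + z\<^sup>2)"
proof -
  have "0 \<le> (x - y)\<^sup>2 + (y - z)\<^sup>2 + (x - z)\<^sup>2"
    by simp
  then show ?thesis
    by (simp add: power2_eq_square algebra_simps)
qed

lemma conv3_Hs_estimate:
  assumes s: "s > 1/2" and u: "in_Hs s u" and v: "in_Hs s v" and w: "in_Hs s w"
  shows "(\<lambda>k. (real_of_int \<bar>k\<bar> powr s * conv3 (\<lambda>k. norm (u k)) (\<lambda>k. norm (v k)) (\<lambda>k. norm (w k)) k)\<^sup>2)
           summable_on Z0"
    and "infsum (\<lambda>k. (real_of_int \<bar>k\<bar> powr s
             * conv3 (\<lambda>k. norm (u k)) (\<lambda>k. norm (v k)) (\<lambda>k. norm (w k)) k)\<^sup>2) Z0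
           \<le> (3 * 3 powr s * Z0_zeta (2 * s) * Hs_norm s u * Hs_norm s v * Hs_norm s w)\<^sup>2"
proof -
  let ?a = "\<lambda>k. norm (u k)" and ?b = "\<lambda>k. norm (v k)" and ?c = "\<lambda>k. norm (w k)"
  let ?M = "abs_powr_mult s"
  let ?N = "Z0_zeta (2 * s) * Hs_norm s u * Hs_norm s v * Hs_norm s w"
  define Q where "Q k = (conv3 (?M ?a) ?b ?c k)\<^sup>2 + (conv3 ?a (?M ?b) ?c k)\<^sup>2
    + (conv3 ?a ?b (?M ?c) k)\<^sup>2" for k
  note Y1 = conv3_Hs_square_summable[OF s u v w]
  note Y2 = conv3_Hs_square_summable[OF s v u w,
      unfolded conv3_swap12[where g = ?a, symmetric] summable_on_R3_index_tensor3_swap12[where g = ?a, symmetric]]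
  note Y3 = conv3_Hs_square_summable[OF s w v u,
      unfolded conv3_swap13[where h = ?a, symmetric] summable_on_R3_index_tensor3_swap13[where h = ?a, symmetric]]
  have Q: "Q summable_on Z0" "infsum Q Z0 \<le> 3 * ?N\<^sup>2"
  proof -
    show "Q summable_on Z0"
      unfolding Q_def by (intro summable_on_add Y1(2) Y2(2) Y3(2))
    have "infsum Q Z0 = infsum (\<lambda>k. (conv3 (?M ?a) ?b ?c k)\<^sup>2) Z0
        + infsum (\<lambda>k. (conv3 ?a (?M ?b) ?c k)\<^sup>2) Z0 + infsum (\<lambda>k. (conv3 ?a ?b (?M ?c) k)\<^sup>2) Z0"
      unfolding Q_def by (simp add: infsum_add summable_on_add Y1(2) Y2(2) Y3(2))
    also have "\<dots> \<le> 3 * ?N\<^sup>2"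
      using Y1(3) Y2(3) Y3(3) by (simp add: mult_ac)
    finally show "infsum Q Z0 \<le> 3 * ?N\<^sup>2" .
  qed
  have pointwise: "(real_of_int \<bar>k\<bar> powr s * conv3 ?a ?b ?c k)\<^sup>2 \<le> (3 powr s)\<^sup>2 * (3 * Q k)" for k
  proof -
    have "real_of_int \<bar>k\<bar> powr s * conv3 ?a ?b ?c k
        \<le> 3 powr s * (conv3 (?M ?a) ?b ?c k + conv3 ?a (?M ?b) ?c k + conv3 ?a ?b (?M ?c) k)"
      using s Y1(1) Y2(1) Y3(1)
        tensor3_summable_on_R3_index in_Hs_summable_norm(1)[OF s] u v w
      by (intro conv3_abs_powr_le) auto
    moreover have "0 \<le> real_of_int \<bar>k\<bar> powr s * conv3 ?a ?b ?c k"
      by (simp add: conv3_nonneg)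
    ultimately have "(real_of_int \<bar>k\<bar> powr s * conv3 ?a ?b ?c k)\<^sup>2
        \<le> (3 powr s * (conv3 (?M ?a) ?b ?c k + conv3 ?a (?M ?b) ?c k + conv3 ?a ?b (?M ?c) k))\<^sup>2"
      by (rule power_mono)
    also have "\<dots> = (3 powr s)\<^sup>2 * (conv3 (?M ?a) ?b ?c k + conv3 ?a (?M ?b) ?c k + conv3 ?a ?b (?M ?c) k)\<^sup>2"
      by (rule power_mult_distrib)
    also have "\<dots> \<le> (3 powr s)\<^sup>2 * (3 * Q k)"
      unfolding Q_def by (intro mult_left_mono square_sum3_le) simp
    finally show ?thesis .
  qed
  have bound: "(\<lambda>k. (3 powr s)\<^sup>2 * (3 * Q k)) summable_on Z0"
    using Q(1) by (intro summable_on_cmult_right)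
  show "(\<lambda>k. (real_of_int \<bar>k\<bar> powr s * conv3 ?a ?b ?c k)\<^sup>2) summable_on Z0"
    by (rule summable_on_comparison_test[OF bound pointwise]) simp
  then have "infsum (\<lambda>k. (real_of_int \<bar>k\<bar> powr s * conv3 ?a ?b ?c k)\<^sup>2) Z0
      \<le> infsum (\<lambda>k. (3 powr s)\<^sup>2 * (3 * Q k)) Z0"
    using bound pointwise by (rule infsum_mono)
  also have "\<dots> = (3 powr s)\<^sup>2 * (3 * infsum Q Z0)"
    by (simp add: infsum_cmult_right')
  also have "\<dots> \<le> (3 powr s)\<^sup>2 * (3 * (3 * ?N\<^sup>2))"
    using Q(2) by (intro mult_left_mono) auto
  also have "\<dots> = (3 * 3 powr s * Z0_zeta (2 * s) * Hs_norm s u * Hs_norm s v * Hs_norm s w)\<^sup>2"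
    by (simp add: power_mult_distrib power2_eq_square)
  finally show "infsum (\<lambda>k. (real_of_int \<bar>k\<bar> powr s * conv3 ?a ?b ?c k)\<^sup>2) Z0
      \<le> (3 * 3 powr s * Z0_zeta (2 * s) * Hs_norm s u * Hs_norm s v * Hs_norm s w)\<^sup>2" .
qed

theorem lemma7p17:
  fixes s :: real
  assumes "s > 1/2"
  shows "\<exists>c6::real. \<forall>(t::real) u v w.
           in_Hs s u \<and> in_Hs s v \<and> in_Hs s w \<longrightarrow>
             (\<forall>k\<in>Z0. (R3_term t u v w) summable_on (R3_index k)) \<and>
             in_Hs s (R3 t u v w) \<and>
             Hs_norm s (R3 t u v w) \<le> c6 * Hs_norm s u * Hs_norm s v * Hs_norm s w"
proof (intro exI[of _ "3 * 3 powr s * Z0_zeta (2 * s)"] allI impI)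
  fix t u v w
  assume "in_Hs s u \<and> in_Hs s v \<and> in_Hs s w"
  then have u: "in_Hs s u" and v: "in_Hs s v" and w: "in_Hs s w"
    by auto
  let ?conv = "conv3 (\<lambda>k. norm (u k)) (\<lambda>k. norm (v k)) (\<lambda>k. norm (w k))"
  let ?bound = "3 * 3 powr s * Z0_zeta (2 * s) * Hs_norm s u * Hs_norm s v * Hs_norm s w"
  have "tensor3 (\<lambda>k. norm (u k)) (\<lambda>k. norm (v k)) (\<lambda>k. norm (w k)) summable_on R3_index k" for k
    using in_Hs_summable_norm(1)[OF assms] u v w by (intro tensor3_summable_on_R3_index) auto
  note R3 = R3_summable_norm_le_conv3[OF this]
  have pointwise: "Hs_weight s (R3 t u v w) k \<le> (real_of_int \<bar>k\<bar> powr s * ?conv k)\<^sup>2" for k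
    unfolding Hs_weight_eq_square abs_powr_mult_def using R3(2)
    by (intro power_mono mult_left_mono) auto
  note estimate = conv3_Hs_estimate[OF assms u v w]
  have summable: "Hs_weight s (R3 t u v w) summable_on Z0"
    using estimate(1) pointwise by (rule summable_on_comparison_test) (simp add: Hs_weight_def)
  have "infsum (Hs_weight s (R3 t u v w)) Z0 \<le> ?bound\<^sup>2"
    using infsum_mono[OF summable estimate(1) pointwise] estimate(2) by linarith
  then have "Hs_norm s (R3 t u v w) \<le> \<bar>?bound\<bar>"
    unfolding Hs_norm_def by (metis real_sqrt_abs real_sqrt_le_mono)
  then show "(\<forall>k\<in>Z0. R3_term t u v w summable_on R3_index k) \<and> in_Hs s (R3 t u v w)
      \<and> Hs_norm s (R3 t u v w) \<le> ?bound"
    using R3(1) summable by (simp add: in_Hs_def Z0_zeta_nonneg Hs_norm_nonneg)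
qed

end
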